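(* Let $\Omega\subset\mathbb{R}^3$ be a bounded domain, assume Property A (see context) with constant $\rho\in[0,1)$, and let $0\le\alpha<(1-\rho)/2$. Then for every $h\in L^\infty_\alpha$, $$|S_\Omega KS_\Omega Kh|_{\infty,\alpha}\lesssim\operatorname{diam}(\Omega)\,|h|_{\infty,\alpha}.$$
   Context: Property A: there are $\nu$ and $k$, with $Kf(x,v)=\int_{\mathbb{R}^3}k(v,v_* )f(x,v_* )dv_*$, and $\gamma\in[0,1]$, $\rho\in[0,1)$, such that $(1+|v|)^\gamma\lesssim\nu(v)\lesssim(1+|v|)^\gamma$, $|\nabla\nu|\lesssim(1+|v|)^{\gamma-1}$, $|k(v,v_* )|\lesssim\frac{E(v,v_* )}{|v-v_*|(1+|v|+|v_*|)^{1-\gamma}}$ and $|\nabla_vk(v,v_* )|\lesssim\frac{(1+|v|)E(v,v_* )}{|v-v_*|^2(1+|v|+|v_*|)^{1-\gamma}}$, where $E=\exp(-\frac{1-\rho}{4}(|v-v_*|^2+(\frac{|v|^2-|v_*|^2}{|v-v_*|})^2))$. $\tau_{x,v}=\inf\{s\ge0:x-sv\in\Omega^c\}$; $S_\Omega h(x,v)=\int_0^{\tau_{x,v}}e^{-\nu(v)s}h(x-sv,v)ds$. $|f|_{\infty,\alpha}=\operatorname{ess\,sup}_{\Omega\times\mathbb{R}^3}e^{\alpha|v|^2}|f|$, $L^\infty_\alpha=\{f:|f|_{\infty,\alpha}<\infty\}$. $a\lesssim b$: $a\le Cb$ for a constant $C\ge0$ independent of $\Omega,h$. *)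

theory Defs
  imports "HOL-Analysis.Analysis" "HOL-Probability.Essential_Supremum"
begin

type_synonym vec3 = "real^3"

text \<open>The Gaussian-type factor E(v,v_*) of Property A (meaningful for v \<noteq> v_*).\<close>
definition Efac :: "real \<Rightarrow> vec3 \<Rightarrow> vec3 \<Rightarrow> real" where
  "Efac \<rho> v w = exp (- ((1 - \<rho>) / 4) *
      ((norm (v - w))\<^sup>2 + (((norm v)\<^sup>2 - (norm w)\<^sup>2) / norm (v - w))\<^sup>2))"

definition propertyA :: "(vec3 \<Rightarrow> real) \<Rightarrow> (vec3 \<Rightarrow> vec3 \<Rightarrow> real) \<Rightarrow> real \<Rightarrow> real \<Rightarrow> bool" where
  "propertyA \<nu> k \<gamma> \<rho> \<longleftrightarrow>
     0 \<le> \<gamma> \<and> \<gamma> \<le> 1 \<and> 0 \<le> \<rho> \<and> \<rho> < 1 \<and>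
     (\<lambda>(v, w). k v w) \<in> borel_measurable lborel \<and>
     (\<exists>c C. 0 < c \<and> (\<forall>v. c * (1 + norm v) powr \<gamma> \<le> \<nu> v \<and> \<nu> v \<le> C * (1 + norm v) powr \<gamma>)) \<and>
     (\<exists>C. \<forall>v. \<exists>D. (\<nu> has_derivative D) (at v) \<and> onorm D \<le> C * (1 + norm v) powr (\<gamma> - 1)) \<and>
     (\<exists>C. \<forall>v w. v \<noteq> w \<longrightarrow>
        \<bar>k v w\<bar> \<le> C * Efac \<rho> v w / (norm (v - w) * (1 + norm v + norm w) powr (1 - \<gamma>))) \<and>
     (\<exists>C. \<forall>v w. v \<noteq> w \<longrightarrow> (\<exists>D. ((\<lambda>u. k u w) has_derivative D) (at v) \<and>
        onorm D \<le> C * (1 + norm v) * Efac \<rho> v w /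
                    ((norm (v - w))\<^sup>2 * (1 + norm v + norm w) powr (1 - \<gamma>))))"

definition Kop :: "(vec3 \<Rightarrow> vec3 \<Rightarrow> real) \<Rightarrow> (vec3 \<Rightarrow> vec3 \<Rightarrow> real) \<Rightarrow> vec3 \<Rightarrow> vec3 \<Rightarrow> real" where
  "Kop k f x v = (\<integral>w. k v w * f x w \<partial>lborel)"

definition tau :: "vec3 set \<Rightarrow> vec3 \<Rightarrow> vec3 \<Rightarrow> real" where
  "tau \<Omega> x v = Inf {s. 0 \<le> s \<and> x - s *\<^sub>R v \<notin> \<Omega>}"

definition S_op :: "vec3 set \<Rightarrow> (vec3 \<Rightarrow> real) \<Rightarrow> (vec3 \<Rightarrow> vec3 \<Rightarrow> real) \<Rightarrow> vec3 \<Rightarrow> vec3 \<Rightarrow> real" where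
  "S_op \<Omega> \<nu> h x v = (LINT s:{0..tau \<Omega> x v}|lborel. exp (- \<nu> v * s) * h (x - s *\<^sub>R v) v)"

definition wnorm :: "vec3 set \<Rightarrow> real \<Rightarrow> (vec3 \<Rightarrow> vec3 \<Rightarrow> real) \<Rightarrow> ereal" where
  "wnorm \<Omega> \<alpha> f = esssup (restrict_space lborel (\<Omega> \<times> UNIV))
      (\<lambda>(x, v). ereal (exp (\<alpha> * (norm v)\<^sup>2) * \<bar>f x v\<bar>))"

end

(*
  Let E(v) = exp (-alpha |v|^2).  Completing the square in the exponent shows
  |k(v,w)| E(w) <= C E(v) exp (-d |v - w|^2) / |v - w| with d > 0 exactly when
  alpha < (1 - rho)/2.  Dominating the radial factors by a product of one-dimensional
  integrable functions of the coordinates of v - w, one gets that K maps E-bounded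
  functions to E-bounded functions, and, since |v - w|^-1 |w|^-1 <= |v - w|^-2 + |w|^-2,
  also E(w)/|w|-bounded functions to E-bounded ones.  Along a backward characteristic
  S integrates for a time at most min (tau, 1/nu), where tau |v| <= diam Omega and
  nu >= c > 0.  Hence S K h is bounded by diam Omega E(v)/|v|, the second K absorbs the
  factor 1/|v|, and the second S costs only 1/c.  Almost-everywhere bounds survive the
  passage to characteristics because almost every line meets a null set in a null set
  of times.
*)

theory Submission
  imports Defs "HOL-Probability.Distributions"
begin

section \<open>Integrals and null sets\<close>

lemma abs_integral_le_of_nn_integral_le:
  fixes f g :: "'a \<Rightarrow> real"
  assumes "AE x in M. \<bar>f x\<bar> \<le> g x" "(\<integral>\<^sup>+x. ennreal (g x) \<partial>M) \<le> ennreal c" "0 \<le> c"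
  shows "\<bar>integral\<^sup>L M f\<bar> \<le> c"
proof (cases "integrable M f")
  case True
  have "ennreal (integral\<^sup>L M (\<lambda>x. \<bar>f x\<bar>)) = (\<integral>\<^sup>+x. ennreal \<bar>f x\<bar> \<partial>M)"
    using True by (intro nn_integral_eq_integral[symmetric]) auto
  also have "\<dots> \<le> (\<integral>\<^sup>+x. ennreal (g x) \<partial>M)"
    using assms(1) by (intro nn_integral_mono_AE) (auto elim!: eventually_mono intro: ennreal_leI)
  also have "\<dots> \<le> ennreal c"
    by (rule assms(2))
  finally have "integral\<^sup>L M (\<lambda>x. \<bar>f x\<bar>) \<le> c"
    using ennreal_le_iff[OF assms(3)] by blast
  moreover have "\<bar>integral\<^sup>L M f\<bar> \<le> integral\<^sup>L M (\<lambda>x. \<bar>f x\<bar>)"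
    using integral_norm_bound[of M f] by simp
  ultimately show ?thesis
    by linarith
qed (use assms(3) in \<open>simp add: not_integrable_integral_eq\<close>)

lemma nn_integral_exp_neg_Icc_le:
  fixes a T :: real
  assumes "0 < a" "0 \<le> T"
  shows "(\<integral>\<^sup>+s. ennreal (indicator {0..T} s * exp (- a * s)) \<partial>lborel) \<le> ennreal (min T (1 / a))"
proof -
  have "((\<lambda>s. exp (- a * s)) has_integral (- exp (- a * T) / a - - exp (- a * 0) / a)) {0..T}"
  proof (rule fundamental_theorem_of_calculus)
    fix s :: real
    have "((\<lambda>s. - exp (- a * s) / a) has_real_derivative exp (- a * s)) (at s within {0..T})"
      using assms by (auto intro!: derivative_eq_intros)
    then show "((\<lambda>s. - exp (- a * s) / a) has_vector_derivative exp (- a * s)) (at s within {0..T})"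
      by (simp add: has_real_derivative_iff_has_vector_derivative)
  qed (use assms in auto)
  then have "((\<lambda>s. exp (- a * s)) has_integral ((1 - exp (- a * T)) / a)) {0..T}"
    by (simp add: diff_divide_distrib)
  from nn_integral_has_integral_lebesgue[OF _ this]
  have "(\<integral>\<^sup>+s. ennreal (indicator {0..T} s * exp (- a * s)) \<partial>lborel) = ennreal ((1 - exp (- a * T)) / a)"
    by simp
  moreover have "(1 - exp (- a * T)) / a \<le> T"
    using exp_ge_add_one_self[of "- a * T"] assms(1) by (simp add: divide_le_eq mult.commute)
  moreover have "(1 - exp (- a * T)) / a \<le> 1 / a"
    using assms(1) by (intro divide_right_mono) auto
  ultimately show ?thesis
    by (simp add: ennreal_leI)
qed

lemma integral_lborel_cong_except_point:
  fixes f g :: "real \<Rightarrow> real"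
  assumes "\<And>s. s \<noteq> s0 \<Longrightarrow> f s = g s"
  shows "integral\<^sup>L lborel f = integral\<^sup>L lborel g"
proof -
  have transfer: "f' \<in> borel_measurable lborel"
    if "f \<in> borel_measurable lborel" "\<And>s. s \<noteq> s0 \<Longrightarrow> f s = f' s" for f f' :: "real \<Rightarrow> real"
  proof -
    have "f' = (\<lambda>s. if s = s0 then f' s0 else f s)"
      using that(2) by auto
    also have "\<dots> \<in> borel_measurable lborel"
      using that(1) by measurable
    finally show ?thesis .
  qed
  have measurable_iff: "f \<in> borel_measurable lborel \<longleftrightarrow> g \<in> borel_measurable lborel"
    using transfer[of f g] transfer[of g f] assms by metis
  show ?thesis
  proof (cases "f \<in> borel_measurable lborel")
    case True
    then show ?thesis
      using measurable_iff AE_lborel_singleton[of s0] assms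
      by (intro integral_cong_AE) (auto elim: eventually_mono)
  next
    case False
    then have "\<not> integrable lborel f" "\<not> integrable lborel g"
      using measurable_iff borel_measurable_integrable by blast+
    then show ?thesis
      by (simp add: not_integrable_integral_eq)
  qed
qed

lemma AE_lborel_line_not_in:
  fixes N :: "'a::euclidean_space set"
  assumes "N \<in> null_sets lborel"
  shows "AE z in lborel. AE s in lborel. fst z - s *\<^sub>R snd z \<notin> N"
proof -
  have [measurable]: "N \<in> sets borel"
    using assms by (simp add: null_sets_def)
  have meas: "{p \<in> space (lborel \<Otimes>\<^sub>M lborel). fst p - s *\<^sub>R snd p \<notin> N} \<in> sets (lborel \<Otimes>\<^sub>M lborel)"
    for s :: real
    by measurable
  have "AE z in lborel. fst z - s *\<^sub>R snd z \<notin> N" for s :: real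
  proof -
    have "AE v in lborel. AE x in lborel. x - s *\<^sub>R v \<notin> N"
      using AE_not_in[OF null_sets_translation[OF assms]] by simp
    then have "AE x in lborel. AE v in lborel. fst (x, v) - s *\<^sub>R snd (x, v) \<notin> N"
      using lborel_pair.AE_commute[where P="\<lambda>x v. x - s *\<^sub>R v \<notin> N", OF meas] by simp
    then have "AE z in lborel \<Otimes>\<^sub>M lborel. fst z - s *\<^sub>R snd z \<notin> N"
      by (rule lborel_pair.AE_pair_measure[OF meas])
    then show ?thesis
      by (simp only: lborel_prod)
  qed
  moreover have "{p \<in> space (lborel \<Otimes>\<^sub>M lborel). fst (fst p) - snd p *\<^sub>R snd (fst p) \<notin> N}
      \<in> sets ((lborel :: ('a \<times> 'a) measure) \<Otimes>\<^sub>M (lborel :: real measure))"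
  proof -
    have [measurable]: "(\<lambda>p::('a \<times> 'a) \<times> real. fst (fst p) - snd p *\<^sub>R snd (fst p)) \<in> borel_measurable borel"
      by (intro borel_measurable_continuous_onI continuous_intros)
    have borel_set: "{p \<in> space borel. fst (fst p) - snd p *\<^sub>R snd (fst p) \<notin> N}
        \<in> sets (borel :: (('a \<times> 'a) \<times> real) measure)"
      by measurable
    have eq: "sets ((lborel :: ('a \<times> 'a) measure) \<Otimes>\<^sub>M (lborel :: real measure)) = sets borel"
      by (simp only: lborel_prod sets_lborel)
    show ?thesis
      unfolding eq sets_eq_imp_space_eq[OF eq] by (rule borel_set)
  qed
  ultimately show ?thesis
    using lborel_pair.AE_commute[where P="\<lambda>z s. fst z - s *\<^sub>R snd z \<notin> N"] by simp
qed

lemma AE_lborel_inner_Basis_neq: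
  fixes c :: "'a::euclidean_space \<Rightarrow> real"
  shows "AE w in lborel. \<forall>b\<in>Basis. w \<bullet> b \<noteq> c b"
proof -
  have "AE w in lborel. w \<bullet> b0 \<noteq> c b0" if b0: "b0 \<in> Basis" for b0 :: 'a
  proof -
    have "emeasure lborel {w::'a. w \<bullet> b0 = c b0}
        = (\<integral>\<^sup>+w. indicator {w::'a. w \<bullet> b0 = c b0} w \<partial>lborel)"
      by (rule nn_integral_indicator[symmetric]) measurable
    also have "\<dots> = (\<integral>\<^sup>+w. (\<Prod>b\<in>Basis. (if b = b0 then indicator {c b0} (w \<bullet> b) else 1)) \<partial>lborel)"
      using b0 by (intro nn_integral_cong) (simp add: prod.delta indicator_def)
    also have "\<dots> = (\<Prod>b\<in>(Basis::'a set). \<integral>\<^sup>+s. (if b = b0 then indicator {c b0} s else 1) \<partial>lborel)"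
      by (rule nn_integral_lborel_prod) auto
    also have "\<dots> = 0"
      using b0 by (intro prod_zero bexI[of _ b0]) auto
    finally have "{w::'a. w \<bullet> b0 = c b0} \<in> null_sets lborel"
      by (auto simp: null_sets_def)
    then show ?thesis
      by (rule AE_I'[THEN eventually_mono]) auto
  qed
  then show ?thesis
    by (subst AE_finite_all) auto
qed

lemma emeasure_lborel_open_pos:
  fixes S :: "'a::euclidean_space set"
  assumes "open S" "S \<noteq> {}"
  shows "0 < emeasure lborel S"
proof -
  obtain z r where "0 < r" "ball z r \<subseteq> S"
    using assms by (meson ex_in_conv openE)
  then have "0 < emeasure lborel (ball z r)"
    by (simp add: emeasure_ball)
  also have "\<dots> \<le> emeasure lborel S"
    using \<open>ball z r \<subseteq> S\<close> assms(1) by (intro emeasure_mono) auto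
  finally show ?thesis .
qed

lemma integrable_exp_neg_scaled_square:
  fixes d :: real
  assumes "0 < d"
  shows "integrable lborel (\<lambda>t. exp (- d * t\<^sup>2))"
proof -
  define \<sigma> where "\<sigma> = 1 / sqrt (2 * d)"
  have \<sigma>: "0 < \<sigma>" "2 * \<sigma>\<^sup>2 = 1 / d"
    using assms by (simp_all add: \<sigma>_def power_divide)
  have "(\<lambda>t. exp (- d * t\<^sup>2)) = (\<lambda>t. sqrt (2 * pi * \<sigma>\<^sup>2) * normal_density 0 \<sigma> t)"
    using \<sigma> assms by (auto simp: normal_density_def field_simps)
  moreover have "integrable lborel (\<lambda>t. sqrt (2 * pi * \<sigma>\<^sup>2) * normal_density 0 \<sigma> t)"
    using \<sigma>(1) by simp
  ultimately show ?thesis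
    by simp
qed

lemma nn_integral_abs_powr_neg_finite:
  fixes p :: real
  assumes "0 \<le> p" "p < 1"
  shows "(\<integral>\<^sup>+t. ennreal (indicator {-1..1} t * \<bar>t\<bar> powr (-p)) \<partial>lborel) < \<infinity>"
proof -
  have "((\<lambda>t. t powr (-p)) has_integral (1 powr (-p+1) / (-p+1))) {0..1}"
    by (rule has_integral_powr_from_0) (use assms in auto)
  from nn_integral_has_integral_lebesgue[OF _ this]
  have right: "(\<integral>\<^sup>+t. ennreal (indicator {0..1} t * t powr (-p)) \<partial>lborel) = ennreal (1 / (1 - p))"
    by simp
  have "(\<integral>\<^sup>+t. ennreal (indicator {0..1} t * t powr (-p)) \<partial>lborel)
      = ennreal \<bar>-1::real\<bar> * (\<integral>\<^sup>+t. ennreal (indicator {0..1} (0 + -1 * t) * (0 + -1 * t) powr (-p)) \<partial>lborel)"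
    by (rule nn_integral_real_affine) auto
  then have left: "(\<integral>\<^sup>+t. ennreal (indicator {0..1} (-t) * (-t) powr (-p)) \<partial>lborel) = ennreal (1 / (1 - p))"
    using right by simp
  have "(\<integral>\<^sup>+t. ennreal (indicator {-1..1} t * \<bar>t\<bar> powr (-p)) \<partial>lborel)
     \<le> (\<integral>\<^sup>+t. ennreal (indicator {0..1} t * t powr (-p))
               + ennreal (indicator {0..1} (-t) * (-t) powr (-p)) \<partial>lborel)"
    by (intro nn_integral_mono)
      (auto simp: indicator_def ennreal_plus[symmetric] simp del: ennreal_plus)
  also have "\<dots> = ennreal (1 / (1 - p)) + ennreal (1 / (1 - p))"
    by (subst nn_integral_add) (auto simp: left right)
  also have "\<dots> < \<infinity>"
    by simp
  finally show ?thesis .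
qed

section \<open>A coordinatewise majorant for Gaussian singular kernels\<close>

lemma norm_powr_neg_le_prod_inner:
  fixes \<eta> :: "'a::euclidean_space"
  assumes nz: "\<forall>b\<in>Basis. \<eta> \<bullet> b \<noteq> 0" and "0 \<le> q"
  shows "norm \<eta> powr (-q) \<le> (\<Prod>b\<in>Basis. \<bar>\<eta> \<bullet> b\<bar> powr (-q / DIM('a)))"
proof -
  have pos: "0 < (\<Prod>b\<in>Basis. \<bar>\<eta> \<bullet> b\<bar>)"
    using nz by (intro prod_pos) auto
  have "(\<Prod>b\<in>Basis. \<bar>\<eta> \<bullet> b\<bar>) \<le> (\<Prod>b\<in>(Basis::'a set). norm \<eta>)"
    by (intro prod_mono) (auto simp: Basis_le_norm)
  moreover have "0 < norm \<eta>"
    using nz by auto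
  ultimately have le: "(\<Prod>b\<in>Basis. \<bar>\<eta> \<bullet> b\<bar>) \<le> norm \<eta> powr DIM('a)"
    by (simp add: powr_realpow)
  have "norm \<eta> powr (-q) = (norm \<eta> powr DIM('a)) powr (-q / DIM('a))"
    by (simp add: powr_powr)
  also have "\<dots> \<le> (\<Prod>b\<in>Basis. \<bar>\<eta> \<bullet> b\<bar>) powr (-q / DIM('a))"
    using pos le assms(2) by (intro powr_mono2') auto
  also have "\<dots> = (\<Prod>b\<in>Basis. \<bar>\<eta> \<bullet> b\<bar> powr (-q / DIM('a)))"
    by (rule prod_powr_distrib)
  finally show ?thesis .
qed

lemma exp_neg_norm_square_eq_prod:
  fixes \<eta> :: "'a::euclidean_space"
  shows "exp (- d * (norm \<eta>)\<^sup>2) = (\<Prod>b\<in>Basis. exp (- d * (\<eta> \<bullet> b)\<^sup>2))"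
proof -
  have "(norm \<eta>)\<^sup>2 = (\<Sum>b\<in>Basis. (\<eta> \<bullet> b)\<^sup>2)"
    unfolding power2_norm_eq_inner by (subst euclidean_inner) (simp add: power2_eq_square)
  then show ?thesis
    by (simp add: sum_distrib_left exp_sum[symmetric])
qed

text \<open>Since \<open>\<bar>\<eta>\<bar>\<^sup>3 \<ge> \<Prod>\<^sub>i \<bar>\<eta>\<^sub>i\<bar>\<close>, the product of \<open>coord_majorant d \<eta>\<^sub>i\<close> over the three
  coordinates dominates \<open>exp (- d \<bar>\<eta>\<bar>\<^sup>2) \<bar>\<eta>\<bar> powr (-q)\<close> for \<open>0 \<le> q \<le> 2\<close>, and its integral
  factorises into one-dimensional integrals.  This replaces polar coordinates.\<close>
definition coord_majorant :: "real \<Rightarrow> real \<Rightarrow> real" where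
  "coord_majorant d t = indicator {-1..1} t * \<bar>t\<bar> powr (-2/3) + exp (- d * t\<^sup>2)"

lemma coord_majorant_nonneg [simp]: "0 \<le> coord_majorant d t"
  by (simp add: coord_majorant_def)

lemma borel_measurable_coord_majorant [measurable]: "coord_majorant d \<in> borel_measurable borel"
  unfolding coord_majorant_def by measurable

lemma abs_powr_le_coord_majorant:
  assumes "t \<noteq> 0" "\<bar>t\<bar> \<le> 1"
  shows "\<bar>t\<bar> powr (-2/3) \<le> coord_majorant d t"
proof -
  have "indicator {-1..1} t = (1::real)"
    using assms by (auto simp: indicator_def abs_le_iff)
  then show ?thesis
    by (simp add: coord_majorant_def add_increasing2)
qed

lemma abs_powr_mult_gauss_le_coord_majorant:
  assumes "t \<noteq> 0" "0 \<le> q" "q \<le> 2" "0 \<le> d"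
  shows "\<bar>t\<bar> powr (-q/3) * exp (- d * t\<^sup>2) \<le> coord_majorant d t"
proof (cases "\<bar>t\<bar> \<le> 1")
  case True
  have "\<bar>t\<bar> powr (-q/3) * exp (- d * t\<^sup>2) \<le> \<bar>t\<bar> powr (-2/3) * 1"
    using True assms by (intro mult_mono powr_mono') auto
  also have "\<dots> \<le> coord_majorant d t"
    using abs_powr_le_coord_majorant[OF assms(1) True] by simp
  finally show ?thesis .
next
  case False
  then have "\<bar>t\<bar> powr (-q/3) \<le> 1"
    using assms powr_mono[of "-q/3" 0 "\<bar>t\<bar>"] by auto
  then have "\<bar>t\<bar> powr (-q/3) * exp (- d * t\<^sup>2) \<le> exp (- d * t\<^sup>2)"
    using mult_right_mono[of _ 1 "exp (- d * t\<^sup>2)"] by simp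
  then show ?thesis
    by (simp add: coord_majorant_def add_increasing)
qed

lemma nn_integral_coord_majorant_finite:
  assumes "0 < d"
  shows "(\<integral>\<^sup>+t. ennreal (coord_majorant d t) \<partial>lborel) < \<infinity>"
proof -
  have "(\<integral>\<^sup>+t. ennreal (exp (- d * t\<^sup>2)) \<partial>lborel) < \<infinity>"
    using integrable_exp_neg_scaled_square[OF assms] by (simp add: integrable_iff_bounded)
  moreover have "(\<integral>\<^sup>+t. ennreal (coord_majorant d t) \<partial>lborel)
      = (\<integral>\<^sup>+t. ennreal (indicator {-1..1} t * \<bar>t\<bar> powr (-(2/3)))
               + ennreal (exp (- d * t\<^sup>2)) \<partial>lborel)"
    by (intro nn_integral_cong) (simp add: coord_majorant_def ennreal_plus[symmetric] del: ennreal_plus)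
  moreover have "\<dots> = (\<integral>\<^sup>+t. ennreal (indicator {-1..1} t * \<bar>t\<bar> powr (-(2/3))) \<partial>lborel)
                   + (\<integral>\<^sup>+t. ennreal (exp (- d * t\<^sup>2)) \<partial>lborel)"
    by (rule nn_integral_add) auto
  ultimately show ?thesis
    using nn_integral_abs_powr_neg_finite[of "2/3"] by (simp add: less_top[symmetric])
qed

lemma gauss_le_prod_coord_majorant:
  fixes \<eta> :: vec3
  shows "exp (- d * (norm \<eta>)\<^sup>2) \<le> (\<Prod>b\<in>Basis. coord_majorant d (\<eta> \<bullet> b))"
  unfolding exp_neg_norm_square_eq_prod[of d \<eta>]
  by (intro prod_mono) (auto simp: coord_majorant_def)

lemma gauss_mult_norm_powr_le_prod_coord_majorant:
  fixes \<eta> :: vec3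
  assumes nz: "\<forall>b\<in>Basis. \<eta> \<bullet> b \<noteq> 0" and q: "0 \<le> q" "q \<le> 2" and "0 \<le> d"
  shows "exp (- d * (norm \<eta>)\<^sup>2) * norm \<eta> powr (-q) \<le> (\<Prod>b\<in>Basis. coord_majorant d (\<eta> \<bullet> b))"
proof -
  have "exp (- d * (norm \<eta>)\<^sup>2) * norm \<eta> powr (-q)
      \<le> (\<Prod>b\<in>Basis. exp (- d * (\<eta> \<bullet> b)\<^sup>2)) * (\<Prod>b\<in>Basis. \<bar>\<eta> \<bullet> b\<bar> powr (-q/3))"
    unfolding exp_neg_norm_square_eq_prod[of d \<eta>]
    using norm_powr_neg_le_prod_inner[OF nz q(1)]
    by (intro mult_left_mono) (auto intro: prod_nonneg)
  also have "\<dots> = (\<Prod>b\<in>Basis. \<bar>\<eta> \<bullet> b\<bar> powr (-q/3) * exp (- d * (\<eta> \<bullet> b)\<^sup>2))"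
    by (simp add: prod.distrib mult.commute)
  also have "\<dots> \<le> (\<Prod>b\<in>Basis. coord_majorant d (\<eta> \<bullet> b))"
    using assms abs_powr_mult_gauss_le_coord_majorant[of _ q d] by (intro prod_mono) auto
  finally show ?thesis .
qed

lemma nn_integral_prod_coord_majorant:
  fixes v :: "'a::euclidean_space"
  shows "(\<integral>\<^sup>+w. ennreal (\<Prod>b\<in>Basis. coord_majorant d ((v - w) \<bullet> b)) \<partial>lborel)
       = (\<integral>\<^sup>+t. ennreal (coord_majorant d t) \<partial>lborel) ^ DIM('a)"
proof -
  have "(\<integral>\<^sup>+w. ennreal (\<Prod>b\<in>Basis. coord_majorant d ((v - w) \<bullet> b)) \<partial>lborel)
      = (\<integral>\<^sup>+w. (\<Prod>b\<in>Basis. ennreal (coord_majorant d (v \<bullet> b - w \<bullet> b))) \<partial>lborel)"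
    by (intro nn_integral_cong) (simp add: prod_ennreal inner_diff_left)
  also have "\<dots> = (\<Prod>b\<in>(Basis::'a set). \<integral>\<^sup>+s. ennreal (coord_majorant d (v \<bullet> b - s)) \<partial>lborel)"
    by (rule nn_integral_lborel_prod) auto
  also have "\<dots> = (\<Prod>b\<in>(Basis::'a set). \<integral>\<^sup>+t. ennreal (coord_majorant d t) \<partial>lborel)"
  proof (intro prod.cong refl)
    fix b :: 'a
    have "(\<integral>\<^sup>+t. ennreal (coord_majorant d t) \<partial>lborel)
        = ennreal \<bar>-1::real\<bar> * (\<integral>\<^sup>+s. ennreal (coord_majorant d (v \<bullet> b + -1 * s)) \<partial>lborel)"
      by (rule nn_integral_real_affine) auto
    then show "(\<integral>\<^sup>+s. ennreal (coord_majorant d (v \<bullet> b - s)) \<partial>lborel)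
        = (\<integral>\<^sup>+t. ennreal (coord_majorant d t) \<partial>lborel)"
      by simp
  qed
  finally show ?thesis
    by simp
qed

lemma nn_integral_gauss_norm_powr_le:
  fixes v :: vec3
  assumes "0 \<le> q" "q \<le> 2" "0 \<le> d"
  shows "(\<integral>\<^sup>+w. ennreal (exp (- d * (norm (v - w))\<^sup>2) * norm (v - w) powr (-q)) \<partial>lborel)
       \<le> (\<integral>\<^sup>+t. ennreal (coord_majorant d t) \<partial>lborel) ^ 3"
proof -
  have "(\<integral>\<^sup>+w. ennreal (exp (- d * (norm (v - w))\<^sup>2) * norm (v - w) powr (-q)) \<partial>lborel)
      \<le> (\<integral>\<^sup>+w. ennreal (\<Prod>b\<in>Basis. coord_majorant d ((v - w) \<bullet> b)) \<partial>lborel)"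
    using AE_lborel_inner_Basis_neq[of "\<lambda>b. v \<bullet> b"]
  proof (intro nn_integral_mono_AE, eventually_elim)
    case (elim w)
    then have "\<forall>b\<in>Basis. (v - w) \<bullet> b \<noteq> 0"
      by (auto simp: inner_diff_left)
    then show ?case
      using gauss_mult_norm_powr_le_prod_coord_majorant assms by (intro ennreal_leI) auto
  qed
  then show ?thesis
    by (simp add: nn_integral_prod_coord_majorant)
qed

text \<open>Near \<open>w = 0\<close> the singularity \<open>\<bar>w\<bar>\<^sup>-\<^sup>2\<close> is majorised by the product centred at \<open>0\<close>,
  elsewhere the Gaussian is majorised by the product centred at \<open>v\<close>.\<close>
lemma gauss_mult_inv_norm_square_le_coord_majorant:
  fixes v w :: vec3
  assumes nz: "\<forall>b\<in>Basis. w \<bullet> b \<noteq> 0" and d: "0 \<le> d"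
  shows "exp (- d * (norm (v - w))\<^sup>2) * norm w powr (-2)
       \<le> (\<Prod>b\<in>Basis. coord_majorant d ((0 - w) \<bullet> b)) + (\<Prod>b\<in>Basis. coord_majorant d ((v - w) \<bullet> b))"
proof -
  have P_nonneg: "0 \<le> (\<Prod>b\<in>Basis. coord_majorant d ((u - w) \<bullet> b))" for u :: vec3
    by (intro prod_nonneg) simp
  show ?thesis
  proof (cases "norm w \<le> 1")
    case True
    have "exp (- d * (norm (v - w))\<^sup>2) * norm w powr (-2) \<le> norm w powr (-2)"
      using d mult_right_mono[of _ 1 "norm w powr (-2)"] by simp
    also have "\<dots> \<le> (\<Prod>b\<in>Basis. \<bar>w \<bullet> b\<bar> powr (-2/3))"
      using norm_powr_neg_le_prod_inner[OF nz, of 2] by simp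
    also have "\<dots> \<le> (\<Prod>b\<in>Basis. coord_majorant d ((0 - w) \<bullet> b))"
    proof (intro prod_mono conjI)
      fix b :: vec3
      assume b: "b \<in> Basis"
      then have "\<bar>w \<bullet> b\<bar> \<le> 1"
        using True Basis_le_norm[OF b, of w] by simp
      then show "\<bar>w \<bullet> b\<bar> powr (-2/3) \<le> coord_majorant d ((0 - w) \<bullet> b)"
        using abs_powr_le_coord_majorant[of "- (w \<bullet> b)" d] nz b by simp
    qed simp
    finally show ?thesis
      using P_nonneg[of v] by linarith
  next
    case False
    then have "norm w powr (-2) \<le> 1"
      using powr_mono[of "-2" 0 "norm w"] by (auto split: if_splits)
    then have "exp (- d * (norm (v - w))\<^sup>2) * norm w powr (-2) \<le> exp (- d * (norm (v - w))\<^sup>2)"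
      using mult_left_mono[of _ 1 "exp (- d * (norm (v - w))\<^sup>2)"] by simp
    also have "\<dots> \<le> (\<Prod>b\<in>Basis. coord_majorant d ((v - w) \<bullet> b))"
      by (rule gauss_le_prod_coord_majorant)
    finally show ?thesis
      using P_nonneg[of 0] by linarith
  qed
qed

lemma nn_integral_gauss_inv_norm_square_le:
  fixes v :: vec3
  assumes "0 \<le> d"
  shows "(\<integral>\<^sup>+w. ennreal (exp (- d * (norm (v - w))\<^sup>2) * norm w powr (-2)) \<partial>lborel)
       \<le> 2 * (\<integral>\<^sup>+t. ennreal (coord_majorant d t) \<partial>lborel) ^ 3"
proof -
  define P where "P u w = (\<Prod>b\<in>(Basis::vec3 set). coord_majorant d ((u - w) \<bullet> b))" for u w
  have "(\<integral>\<^sup>+w. ennreal (exp (- d * (norm (v - w))\<^sup>2) * norm w powr (-2)) \<partial>lborel)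
      \<le> (\<integral>\<^sup>+w. ennreal (P 0 w) + ennreal (P v w) \<partial>lborel)"
    using AE_lborel_inner_Basis_neq[of "\<lambda>b::vec3. 0"]
  proof (intro nn_integral_mono_AE, eventually_elim)
    case (elim w)
    moreover have "0 \<le> P 0 w" "0 \<le> P v w"
      unfolding P_def by (simp_all add: prod_nonneg)
    ultimately show ?case
      using gauss_mult_inv_norm_square_le_coord_majorant[of w d v] assms
      by (simp add: P_def ennreal_plus[symmetric] del: ennreal_plus)
  qed
  also have "\<dots> = (\<integral>\<^sup>+w. ennreal (P 0 w) \<partial>lborel) + (\<integral>\<^sup>+w. ennreal (P v w) \<partial>lborel)"
    unfolding P_def by (rule nn_integral_add) auto
  also have "\<dots> = 2 * (\<integral>\<^sup>+t. ennreal (coord_majorant d t) \<partial>lborel) ^ 3"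
    by (simp only: P_def nn_integral_prod_coord_majorant mult_2 DIM_cart DIM_real) simp
  finally show ?thesis .
qed

section \<open>Weighted bounds for the kernel of K\<close>

definition gauss_rate :: "real \<Rightarrow> real \<Rightarrow> real" where
  "gauss_rate \<rho> \<alpha> = (1 - \<rho>) / 4 - \<alpha>\<^sup>2 / (1 - \<rho>)"

lemma gauss_rate_pos:
  assumes "0 \<le> \<alpha>" "\<alpha> < (1 - \<rho>) / 2"
  shows "0 < gauss_rate \<rho> \<alpha>"
proof -
  have "\<alpha> * \<alpha> < (1 - \<rho>) / 2 * ((1 - \<rho>) / 2)"
    using assms by (intro mult_strict_mono) auto
  moreover have "0 < 1 - \<rho>"
    using assms by simp
  ultimately show ?thesis
    by (simp add: gauss_rate_def power2_eq_square field_simps)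
qed

text \<open>Completing the square: with \<open>\<beta> = (1 - \<rho>)/4\<close>, \<open>n = \<bar>v - w\<bar>\<close> and
  \<open>t = (\<bar>v\<bar>\<^sup>2 - \<bar>w\<bar>\<^sup>2)/n\<close>, the exponent gains \<open>(\<alpha> n - 2 \<beta> t)\<^sup>2 / (4 \<beta>) \<ge> 0\<close>.\<close>
lemma Efac_mult_gauss_le:
  fixes v w :: vec3
  assumes "v \<noteq> w" "\<rho> < 1"
  shows "Efac \<rho> v w * exp (- \<alpha> * (norm w)\<^sup>2)
       \<le> exp (- gauss_rate \<rho> \<alpha> * (norm (v - w))\<^sup>2) * exp (- \<alpha> * (norm v)\<^sup>2)"
proof -
  define \<beta> where "\<beta> = (1 - \<rho>) / 4"
  define n where "n = norm (v - w)"
  define t where "t = ((norm v)\<^sup>2 - (norm w)\<^sup>2) / n"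
  have "0 < n" "0 < \<beta>"
    using assms by (simp_all add: n_def \<beta>_def)
  then have "(- gauss_rate \<rho> \<alpha> * n\<^sup>2 - \<alpha> * (norm v)\<^sup>2) - (- \<beta> * (n\<^sup>2 + t\<^sup>2) - \<alpha> * (norm w)\<^sup>2)
      = (\<alpha> * n - 2 * \<beta> * t)\<^sup>2 / (4 * \<beta>)"
    unfolding t_def gauss_rate_def \<beta>_def by (simp add: field_simps power2_eq_square)
  moreover have "0 \<le> (\<alpha> * n - 2 * \<beta> * t)\<^sup>2 / (4 * \<beta>)"
    using \<open>0 < \<beta>\<close> by simp
  moreover have "Efac \<rho> v w = exp (- \<beta> * (n\<^sup>2 + t\<^sup>2))"
    by (simp add: Efac_def n_def t_def \<beta>_def)
  ultimately show ?thesis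
    by (simp add: n_def exp_add[symmetric])
qed

lemma abs_kernel_mult_gauss_le:
  fixes v w :: vec3
  assumes "v \<noteq> w" "\<rho> < 1" "0 \<le> Ck" and \<kappa>: "\<bar>\<kappa>\<bar> \<le> Ck * Efac \<rho> v w / norm (v - w)"
  shows "\<bar>\<kappa>\<bar> * exp (- \<alpha> * (norm w)\<^sup>2)
       \<le> Ck * exp (- \<alpha> * (norm v)\<^sup>2) * (exp (- gauss_rate \<rho> \<alpha> * (norm (v - w))\<^sup>2) * norm (v - w) powr (-1))"
proof -
  have "\<bar>\<kappa>\<bar> * exp (- \<alpha> * (norm w)\<^sup>2) \<le> Ck / norm (v - w) * (Efac \<rho> v w * exp (- \<alpha> * (norm w)\<^sup>2))"
    using mult_right_mono[OF \<kappa>, of "exp (- \<alpha> * (norm w)\<^sup>2)"] by simp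
  also have "\<dots> \<le> Ck / norm (v - w) * (exp (- gauss_rate \<rho> \<alpha> * (norm (v - w))\<^sup>2) * exp (- \<alpha> * (norm v)\<^sup>2))"
    using Efac_mult_gauss_le assms by (intro mult_left_mono) auto
  also have "\<dots> = Ck * exp (- \<alpha> * (norm v)\<^sup>2) * (exp (- gauss_rate \<rho> \<alpha> * (norm (v - w))\<^sup>2) * norm (v - w) powr (-1))"
    by (simp add: powr_minus_divide)
  finally show ?thesis .
qed

lemma nn_integral_kernel_gauss_le:
  fixes v :: vec3
  assumes "\<rho> < 1" "0 \<le> gauss_rate \<rho> \<alpha>" "0 \<le> Ck"
    and k: "\<And>w. v \<noteq> w \<Longrightarrow> \<bar>k v w\<bar> \<le> Ck * Efac \<rho> v w / norm (v - w)"
  shows "(\<integral>\<^sup>+w. ennreal (\<bar>k v w\<bar> * exp (- \<alpha> * (norm w)\<^sup>2)) \<partial>lborel)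
       \<le> ennreal (Ck * exp (- \<alpha> * (norm v)\<^sup>2))
         * (\<integral>\<^sup>+t. ennreal (coord_majorant (gauss_rate \<rho> \<alpha>) t) \<partial>lborel) ^ 3"
proof -
  let ?G = "\<lambda>w. exp (- gauss_rate \<rho> \<alpha> * (norm (v - w))\<^sup>2) * norm (v - w) powr (-1)"
  have "(\<integral>\<^sup>+w. ennreal (\<bar>k v w\<bar> * exp (- \<alpha> * (norm w)\<^sup>2)) \<partial>lborel)
      \<le> (\<integral>\<^sup>+w. ennreal (Ck * exp (- \<alpha> * (norm v)\<^sup>2)) * ennreal (?G w) \<partial>lborel)"
    using AE_lborel_singleton[of v]
  proof (intro nn_integral_mono_AE, eventually_elim)
    case (elim w)
    then show ?case
      using abs_kernel_mult_gauss_le[OF _ assms(1,3) k] assms(3) elim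
      by (simp add: ennreal_mult[symmetric] ennreal_leI)
  qed
  also have "\<dots> = ennreal (Ck * exp (- \<alpha> * (norm v)\<^sup>2)) * (\<integral>\<^sup>+w. ennreal (?G w) \<partial>lborel)"
    by (rule nn_integral_cmult) measurable
  also have "\<dots> \<le> ennreal (Ck * exp (- \<alpha> * (norm v)\<^sup>2))
                  * (\<integral>\<^sup>+t. ennreal (coord_majorant (gauss_rate \<rho> \<alpha>) t) \<partial>lborel) ^ 3"
    using nn_integral_gauss_norm_powr_le[of 1 "gauss_rate \<rho> \<alpha>" v] assms(2)
    by (intro mult_left_mono) auto
  finally show ?thesis .
qed

lemma abs_kernel_mult_gauss_inv_norm_le:
  fixes v w :: vec3
  assumes "v \<noteq> w" "\<rho> < 1" "0 \<le> Ck" and \<kappa>: "\<bar>\<kappa>\<bar> \<le> Ck * Efac \<rho> v w / norm (v - w)"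
  shows "\<bar>\<kappa>\<bar> * (exp (- \<alpha> * (norm w)\<^sup>2) * norm w powr (-1))
       \<le> Ck * exp (- \<alpha> * (norm v)\<^sup>2) * (exp (- gauss_rate \<rho> \<alpha> * (norm (v - w))\<^sup>2) * norm (v - w) powr (-2)
           + exp (- gauss_rate \<rho> \<alpha> * (norm (v - w))\<^sup>2) * norm w powr (-2))"
proof -
  define c where "c = Ck * exp (- \<alpha> * (norm v)\<^sup>2)"
  define A where "A = norm (v - w) powr (-1)"
  define B where "B = norm w powr (-1)"
  define X where "X = exp (- gauss_rate \<rho> \<alpha> * (norm (v - w))\<^sup>2)"
  have ABX: "0 \<le> A" "0 \<le> B" "0 \<le> X" "0 \<le> c"
    using assms(3) by (auto simp: A_def B_def X_def c_def)
  have squares: "norm (v - w) powr (-2) = A * A" "norm w powr (-2) = B * B"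
    unfolding A_def B_def powr_add[symmetric] by simp_all
  have "A * B \<le> A * A + B * B"
  proof -
    have "0 \<le> (A - B)\<^sup>2"
      by simp
    then show ?thesis
      using mult_nonneg_nonneg[OF ABX(1,2)] by (simp add: power2_eq_square algebra_simps)
  qed
  have "\<bar>\<kappa>\<bar> * (exp (- \<alpha> * (norm w)\<^sup>2) * norm w powr (-1)) = \<bar>\<kappa>\<bar> * exp (- \<alpha> * (norm w)\<^sup>2) * B"
    by (simp add: B_def)
  also have "\<dots> \<le> c * (X * A) * B"
    using abs_kernel_mult_gauss_le[OF assms] ABX(2) unfolding c_def X_def A_def by (rule mult_right_mono)
  also have "\<dots> = c * X * (A * B)"
    by (simp only: mult_ac)
  also have "\<dots> \<le> c * X * (A * A + B * B)"
    using \<open>A * B \<le> A * A + B * B\<close> ABX by (intro mult_left_mono) auto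
  also have "\<dots> = c * (X * (A * A) + X * (B * B))"
    by (simp only: distrib_left mult_ac)
  finally show ?thesis
    unfolding squares c_def[symmetric] X_def[symmetric] .
qed

lemma nn_integral_kernel_gauss_inv_norm_le:
  fixes v :: vec3
  assumes "\<rho> < 1" "0 \<le> gauss_rate \<rho> \<alpha>" "0 \<le> Ck"
    and k: "\<And>w. v \<noteq> w \<Longrightarrow> \<bar>k v w\<bar> \<le> Ck * Efac \<rho> v w / norm (v - w)"
  shows "(\<integral>\<^sup>+w. ennreal (\<bar>k v w\<bar> * (exp (- \<alpha> * (norm w)\<^sup>2) * norm w powr (-1))) \<partial>lborel)
       \<le> ennreal (3 * Ck * exp (- \<alpha> * (norm v)\<^sup>2))
         * (\<integral>\<^sup>+t. ennreal (coord_majorant (gauss_rate \<rho> \<alpha>) t) \<partial>lborel) ^ 3"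
proof -
  define d where "d = gauss_rate \<rho> \<alpha>"
  define c where "c = Ck * exp (- \<alpha> * (norm v)\<^sup>2)"
  define I where "I = (\<integral>\<^sup>+t. ennreal (coord_majorant d t) \<partial>lborel)"
  define G where "G u w = exp (- d * (norm (v - w))\<^sup>2) * norm u powr (-2)" for u w :: vec3
  have c: "0 \<le> c"
    using assms(3) by (simp add: c_def)
  have "(\<integral>\<^sup>+w. ennreal (\<bar>k v w\<bar> * (exp (- \<alpha> * (norm w)\<^sup>2) * norm w powr (-1))) \<partial>lborel)
      \<le> (\<integral>\<^sup>+w. ennreal c * (ennreal (G (v - w) w) + ennreal (G w w)) \<partial>lborel)"
    using AE_lborel_singleton[of v]
  proof (intro nn_integral_mono_AE, eventually_elim)
    case (elim w)
    then have "v \<noteq> w"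
      by blast
    have "0 \<le> G u w" for u
      by (simp add: G_def)
    then show ?case
      using abs_kernel_mult_gauss_inv_norm_le[OF \<open>v \<noteq> w\<close> assms(1,3) k[OF \<open>v \<noteq> w\<close>]] c
      unfolding G_def c_def d_def
      by (simp add: ennreal_mult[symmetric] ennreal_plus[symmetric] ennreal_leI del: ennreal_plus)
  qed
  also have "\<dots> = ennreal c * (\<integral>\<^sup>+w. ennreal (G (v - w) w) + ennreal (G w w) \<partial>lborel)"
    unfolding G_def by (rule nn_integral_cmult) measurable
  also have "(\<integral>\<^sup>+w. ennreal (G (v - w) w) + ennreal (G w w) \<partial>lborel)
      = (\<integral>\<^sup>+w. ennreal (G (v - w) w) \<partial>lborel) + (\<integral>\<^sup>+w. ennreal (G w w) \<partial>lborel)"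
    unfolding G_def by (rule nn_integral_add) measurable
  also have "ennreal c * ((\<integral>\<^sup>+w. ennreal (G (v - w) w) \<partial>lborel) + (\<integral>\<^sup>+w. ennreal (G w w) \<partial>lborel))
      \<le> ennreal c * (I ^ 3 + 2 * I ^ 3)"
    using nn_integral_gauss_norm_powr_le[of 2 d v] nn_integral_gauss_inv_norm_square_le[of d v] assms(2)
    unfolding I_def d_def G_def by (intro mult_left_mono add_mono) auto
  also have "I ^ 3 + 2 * I ^ 3 = 3 * I ^ 3"
    using distrib_right[of 1 2 "I ^ 3"] by simp
  also have "ennreal c * (3 * I ^ 3) = ennreal (3 * c) * I ^ 3"
    using c by (simp add: ennreal_mult mult_ac)
  finally show ?thesis
    by (simp only: c_def I_def d_def mult.assoc)
qed

lemma propertyA_nu_lower_bound: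
  assumes "propertyA \<nu> k \<gamma> \<rho>"
  obtains c where "0 < c" "\<And>v. c \<le> \<nu> v"
proof -
  note A = assms[unfolded propertyA_def]
  obtain c where c: "0 < c" "\<And>v. c * (1 + norm v) powr \<gamma> \<le> \<nu> v"
    using A by blast
  have "c \<le> \<nu> v" for v
  proof -
    have "1 \<le> (1 + norm v) powr \<gamma>"
      using A by (intro ge_one_powr_ge_zero) auto
    then have "c * 1 \<le> c * (1 + norm v) powr \<gamma>"
      using c(1) by (intro mult_left_mono) auto
    then show ?thesis
      using c(2)[of v] by simp
  qed
  with c(1) show ?thesis
    using that by blast
qed

lemma propertyA_nu_measurable:
  assumes "propertyA \<nu> k \<gamma> \<rho>"
  shows "\<nu> \<in> borel_measurable borel"
proof -
  obtain C where "\<And>v. \<exists>D. (\<nu> has_derivative D) (at v) \<and> onorm D \<le> C * (1 + norm v) powr (\<gamma> - 1)"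
    using assms[unfolded propertyA_def] by blast
  then have "isCont \<nu> v" for v
    using has_derivative_continuous by blast
  then show ?thesis
    by (intro borel_measurable_continuous_onI continuous_at_imp_continuous_on) auto
qed

lemma propertyA_kernel_measurable:
  assumes "propertyA \<nu> k \<gamma> \<rho>"
  shows "(\<lambda>z. k (fst z) (snd z)) \<in> borel_measurable (borel \<Otimes>\<^sub>M borel)"
proof -
  have "(\<lambda>(v, w). k v w) \<in> borel_measurable lborel"
    using assms[unfolded propertyA_def] by blast
  then show ?thesis
    by (simp add: borel_prod case_prod_beta')
qed

lemma propertyA_kernel_bound:
  assumes "propertyA \<nu> k \<gamma> \<rho>"
  obtains Ck where "0 \<le> Ck" "\<And>v w. v \<noteq> w \<Longrightarrow> \<bar>k v w\<bar> \<le> Ck * Efac \<rho> v w / norm (v - w)"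
proof -
  note A = assms[unfolded propertyA_def]
  obtain C where C: "\<And>v w. v \<noteq> w \<Longrightarrow>
      \<bar>k v w\<bar> \<le> C * Efac \<rho> v w / (norm (v - w) * (1 + norm v + norm w) powr (1 - \<gamma>))"
    using A by blast
  have "\<bar>k v w\<bar> \<le> max C 0 * Efac \<rho> v w / norm (v - w)" if "v \<noteq> w" for v w
  proof -
    have "1 \<le> (1 + norm v + norm w) powr (1 - \<gamma>)"
      using A by (intro ge_one_powr_ge_zero) auto
    moreover have "0 \<le> Efac \<rho> v w" "0 < norm (v - w)"
      using that by (auto simp: Efac_def)
    ultimately have "C * Efac \<rho> v w / (norm (v - w) * (1 + norm v + norm w) powr (1 - \<gamma>))
        \<le> max C 0 * Efac \<rho> v w / (norm (v - w) * 1)"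
      by (intro frac_le mult_right_mono mult_left_mono mult_nonneg_nonneg) auto
    then show ?thesis
      using C[OF that] by simp
  qed
  then show ?thesis
    using that[of "max C 0"] by simp
qed

lemma propertyA_weighted_kernel_bounds:
  assumes A: "propertyA \<nu> k \<gamma> \<rho>" and "0 \<le> \<alpha>" "\<alpha> < (1 - \<rho>) / 2"
  obtains C1 C2 where "0 \<le> C1" "0 \<le> C2"
    "\<And>v. (\<integral>\<^sup>+w. ennreal (\<bar>k v w\<bar> * exp (- \<alpha> * (norm w)\<^sup>2)) \<partial>lborel)
       \<le> ennreal (C1 * exp (- \<alpha> * (norm v)\<^sup>2))"
    "\<And>v. (\<integral>\<^sup>+w. ennreal (\<bar>k v w\<bar> * (exp (- \<alpha> * (norm w)\<^sup>2) * norm w powr (-1))) \<partial>lborel)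
       \<le> ennreal (C2 * exp (- \<alpha> * (norm v)\<^sup>2))"
proof -
  obtain Ck where Ck: "0 \<le> Ck" "\<And>v w. v \<noteq> w \<Longrightarrow> \<bar>k v w\<bar> \<le> Ck * Efac \<rho> v w / norm (v - w)"
    using propertyA_kernel_bound[OF A] by blast
  have \<rho>: "\<rho> < 1"
    using A by (simp add: propertyA_def)
  have d: "0 \<le> gauss_rate \<rho> \<alpha>" and I: "(\<integral>\<^sup>+t. ennreal (coord_majorant (gauss_rate \<rho> \<alpha>) t) \<partial>lborel) < \<infinity>"
    using gauss_rate_pos[OF assms(2,3)] nn_integral_coord_majorant_finite by auto
  define P where "P = enn2real ((\<integral>\<^sup>+t. ennreal (coord_majorant (gauss_rate \<rho> \<alpha>) t) \<partial>lborel) ^ 3)"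
  have P: "(\<integral>\<^sup>+t. ennreal (coord_majorant (gauss_rate \<rho> \<alpha>) t) \<partial>lborel) ^ 3 = ennreal P" "0 \<le> P"
    using I by (auto simp: P_def less_top power_less_top_ennreal)
  show ?thesis
  proof (rule that[of "Ck * P" "3 * Ck * P"])
    fix v
    have "(\<integral>\<^sup>+w. ennreal (\<bar>k v w\<bar> * exp (- \<alpha> * (norm w)\<^sup>2)) \<partial>lborel)
       \<le> ennreal (Ck * exp (- \<alpha> * (norm v)\<^sup>2))
         * (\<integral>\<^sup>+t. ennreal (coord_majorant (gauss_rate \<rho> \<alpha>) t) \<partial>lborel) ^ 3"
      by (rule nn_integral_kernel_gauss_le[OF \<rho> d Ck(1)]) (rule Ck(2))
    then show "(\<integral>\<^sup>+w. ennreal (\<bar>k v w\<bar> * exp (- \<alpha> * (norm w)\<^sup>2)) \<partial>lborel)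
       \<le> ennreal (Ck * P * exp (- \<alpha> * (norm v)\<^sup>2))"
      using Ck P by (simp add: ennreal_mult[symmetric] mult_ac)
    have "(\<integral>\<^sup>+w. ennreal (\<bar>k v w\<bar> * (exp (- \<alpha> * (norm w)\<^sup>2) * norm w powr (-1))) \<partial>lborel)
       \<le> ennreal (3 * Ck * exp (- \<alpha> * (norm v)\<^sup>2))
         * (\<integral>\<^sup>+t. ennreal (coord_majorant (gauss_rate \<rho> \<alpha>) t) \<partial>lborel) ^ 3"
      by (rule nn_integral_kernel_gauss_inv_norm_le[OF \<rho> d Ck(1)]) (rule Ck(2))
    then show "(\<integral>\<^sup>+w. ennreal (\<bar>k v w\<bar> * (exp (- \<alpha> * (norm w)\<^sup>2) * norm w powr (-1))) \<partial>lborel)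
       \<le> ennreal (3 * Ck * P * exp (- \<alpha> * (norm v)\<^sup>2))"
      using Ck P by (simp add: ennreal_mult[symmetric] mult_ac)
  qed (use Ck P in auto)
qed

section \<open>The backward exit time\<close>

lemma mem_before_tau:
  assumes "0 \<le> s" "s < tau \<Omega> x v"
  shows "x - s *\<^sub>R v \<in> \<Omega>"
proof (rule ccontr)
  assume "x - s *\<^sub>R v \<notin> \<Omega>"
  then have "tau \<Omega> x v \<le> s"
    unfolding tau_def using assms(1) by (intro cInf_lower) (auto intro: bdd_belowI[of _ 0])
  with assms(2) show False
    by simp
qed

text \<open>If \<open>x \<in> \<Omega>\<close> and \<open>v = 0\<close> the exit set is empty and \<open>tau \<Omega> x v\<close> is the junk value \<open>Inf {}\<close>.\<close>
lemma tau_exits: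
  fixes x v :: vec3
  assumes "open \<Omega>" "bounded \<Omega>" "\<not> (x \<in> \<Omega> \<and> v = 0)"
  shows "0 \<le> tau \<Omega> x v" "x - tau \<Omega> x v *\<^sub>R v \<notin> \<Omega>"
proof -
  let ?E = "{s. 0 \<le> s \<and> x - s *\<^sub>R v \<notin> \<Omega>}"
  have "\<exists>s. 0 \<le> s \<and> x - s *\<^sub>R v \<notin> \<Omega>"
  proof (cases "x \<in> \<Omega>")
    case True
    with assms(3) have "v \<noteq> 0"
      by simp
    obtain B where B: "\<forall>y\<in>\<Omega>. norm y \<le> B"
      using assms(2) by (auto simp: bounded_iff)
    define s where "s = (\<bar>B\<bar> + norm x + 1) / norm v"
    have "0 \<le> s" "s * norm v = \<bar>B\<bar> + norm x + 1"
      using \<open>v \<noteq> 0\<close> by (simp_all add: s_def)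
    moreover have "norm (s *\<^sub>R v) \<le> norm (x - s *\<^sub>R v) + norm x"
      using norm_triangle_sub[of "s *\<^sub>R v" x] by (simp add: norm_minus_commute)
    ultimately have "norm (x - s *\<^sub>R v) > B"
      by simp
    then have "x - s *\<^sub>R v \<notin> \<Omega>"
      using B by force
    with \<open>0 \<le> s\<close> show ?thesis
      by blast
  qed (use exI[of _ 0] in auto)
  then have ne: "?E \<noteq> {}"
    by blast
  have bdd: "bdd_below ?E"
    by (rule bdd_belowI[of _ 0]) simp
  have closed: "closed ?E"
  proof -
    have "closed ((\<lambda>s. x - s *\<^sub>R v) -` (- \<Omega>))"
      using assms(1) by (intro continuous_closed_vimage) (auto intro!: continuous_intros)
    moreover have "?E = {0..} \<inter> (\<lambda>s. x - s *\<^sub>R v) -` (- \<Omega>)"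
      by auto
    ultimately show ?thesis
      by (simp add: closed_Int)
  qed
  have "tau \<Omega> x v \<in> ?E"
    unfolding tau_def by (rule closed_contains_Inf[OF ne bdd closed])
  then show "0 \<le> tau \<Omega> x v" "x - tau \<Omega> x v *\<^sub>R v \<notin> \<Omega>"
    by auto
qed

lemma tau_le_iff:
  fixes x v :: vec3
  assumes "open \<Omega>" "bounded \<Omega>" "\<not> (x \<in> \<Omega> \<and> v = 0)"
  shows "tau \<Omega> x v \<le> a \<longleftrightarrow> (\<exists>s\<in>{0..a}. x - s *\<^sub>R v \<notin> \<Omega>)"
proof
  assume "tau \<Omega> x v \<le> a"
  then show "\<exists>s\<in>{0..a}. x - s *\<^sub>R v \<notin> \<Omega>"
    using tau_exits[OF assms] by auto
next
  assume "\<exists>s\<in>{0..a}. x - s *\<^sub>R v \<notin> \<Omega>"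
  then obtain s where "s \<in> {0..a}" "x - s *\<^sub>R v \<notin> \<Omega>"
    by blast
  then have "tau \<Omega> x v \<le> s"
    unfolding tau_def by (intro cInf_lower) (auto intro: bdd_belowI[of _ 0])
  with \<open>s \<in> {0..a}\<close> show "tau \<Omega> x v \<le> a"
    by simp
qed

lemma tau_le_diameter_div_norm:
  fixes x v :: vec3
  assumes "bounded \<Omega>" "x \<in> \<Omega>" "v \<noteq> 0"
  shows "tau \<Omega> x v \<le> diameter \<Omega> / norm v"
proof (rule ccontr)
  define q where "q = diameter \<Omega> / norm v"
  assume "\<not> tau \<Omega> x v \<le> diameter \<Omega> / norm v"
  then have "q < tau \<Omega> x v"
    by (simp add: q_def)
  then obtain s where s: "q < s" "s < tau \<Omega> x v"
    using dense by blast
  moreover have "0 \<le> q"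
    using diameter_ge_0[OF assms(1)] by (simp add: q_def)
  ultimately have "0 \<le> s"
    by simp
  have "dist x (x - s *\<^sub>R v) \<le> diameter \<Omega>"
    using assms mem_before_tau[OF \<open>0 \<le> s\<close> s(2)] by (intro diameter_bounded_bound)
  with \<open>0 \<le> s\<close> have "s * norm v \<le> diameter \<Omega>"
    by (simp add: dist_norm)
  with s(1) assms(3) show False
    by (simp add: q_def pos_divide_less_eq)
qed

lemma borel_measurable_tau:
  fixes \<Omega> :: "vec3 set"
  assumes "open \<Omega>" "bounded \<Omega>"
  shows "(\<lambda>z. tau \<Omega> (fst z) (snd z)) \<in> borel_measurable borel"
proof (rule borel_measurable_iff_le[THEN iffD2], intro allI)
  fix a :: real
  define T where "T = (\<lambda>p::real \<times> (vec3 \<times> vec3). fst (snd p) - fst p *\<^sub>R snd (snd p)) -` (- \<Omega>)"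
  define Z where "Z = (if Inf {} \<le> a then \<Omega> \<times> {0::vec3} else {})"
  have "closed T"
    unfolding T_def using assms(1) by (intro continuous_closed_vimage) (auto intro!: continuous_intros)
  then have "closed {z. \<exists>s. s \<in> {0..a} \<and> (s, z) \<in> T}"
    by (rule closed_compact_projection[OF compact_Icc])
  moreover have "Z \<in> sets borel"
    using borel_Times[OF borel_open[OF assms(1)] borel_closed[of "{0::vec3}"]] by (simp add: Z_def)
  moreover have "{z \<in> space borel. tau \<Omega> (fst z) (snd z) \<le> a} = {z. \<exists>s. s \<in> {0..a} \<and> (s, z) \<in> T} \<union> Z"
  proof (intro set_eqI)
    fix z :: "vec3 \<times> vec3"
    show "z \<in> {z \<in> space borel. tau \<Omega> (fst z) (snd z) \<le> a} \<longleftrightarrow> z \<in> {z. \<exists>s. s \<in> {0..a} \<and> (s, z) \<in> T} \<union> Z"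
    proof (cases "fst z \<in> \<Omega> \<and> snd z = 0")
      case True
      then have "tau \<Omega> (fst z) (snd z) = Inf {}"
        by (simp add: tau_def)
      moreover have "z \<in> \<Omega> \<times> {0}" "\<And>s. (s, z) \<notin> T"
        using True by (auto simp: T_def mem_Times_iff)
      ultimately show ?thesis
        by (simp add: Z_def)
    next
      case False
      then show ?thesis
        using tau_le_iff[OF assms False] by (auto simp: T_def Z_def)
    qed
  qed
  ultimately show "{z \<in> space borel. tau \<Omega> (fst z) (snd z) \<le> a} \<in> sets borel"
    by auto
qed

section \<open>The operators S and K\<close>

lemma abs_S_op_le:
  assumes "0 \<le> tau \<Omega> x v" "0 < \<nu> v" "0 \<le> B"
    and "AE s in lborel. 0 \<le> s \<and> s < tau \<Omega> x v \<longrightarrow> \<bar>g (x - s *\<^sub>R v) v\<bar> \<le> B"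
  shows "\<bar>S_op \<Omega> \<nu> g x v\<bar> \<le> B * min (tau \<Omega> x v) (1 / \<nu> v)"
  unfolding S_op_def set_lebesgue_integral_def
proof (rule abs_integral_le_of_nn_integral_le)
  define T where "T = tau \<Omega> x v"
  show "AE s in lborel. \<bar>indicator {0..T} s *\<^sub>R (exp (- \<nu> v * s) * g (x - s *\<^sub>R v) v)\<bar>
      \<le> B * (indicator {0..T} s * exp (- \<nu> v * s))"
    using assms(4) AE_lborel_singleton[of T]
  proof eventually_elim
    case (elim s)
    show ?case
    proof (cases "s \<in> {0..T}")
      case True
      with elim have "\<bar>g (x - s *\<^sub>R v) v\<bar> \<le> B"
        by (auto simp: T_def)
      then have "exp (- \<nu> v * s) * \<bar>g (x - s *\<^sub>R v) v\<bar> \<le> exp (- \<nu> v * s) * B"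
        by (rule mult_left_mono) simp
      with True show ?thesis
        by (simp add: abs_mult mult.commute)
    qed simp
  qed
  have "(\<integral>\<^sup>+s. ennreal (B * (indicator {0..T} s * exp (- \<nu> v * s))) \<partial>lborel)
      = ennreal B * (\<integral>\<^sup>+s. ennreal (indicator {0..T} s * exp (- \<nu> v * s)) \<partial>lborel)"
    using assms(3) by (subst nn_integral_cmult[symmetric]) (auto simp: ennreal_mult)
  also have "\<dots> \<le> ennreal B * ennreal (min T (1 / \<nu> v))"
    using nn_integral_exp_neg_Icc_le assms(1,2) by (intro mult_left_mono) (auto simp: T_def)
  finally show "(\<integral>\<^sup>+s. ennreal (B * (indicator {0..T} s * exp (- \<nu> v * s))) \<partial>lborel)
      \<le> ennreal (B * min T (1 / \<nu> v))"
    using assms(1,2,3) by (simp add: ennreal_mult T_def)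
  show "0 \<le> B * min T (1 / \<nu> v)"
    using assms(1,2,3) by (simp add: T_def)
qed

text \<open>The exit time \<open>s = tau\<close>, where \<open>x - s v\<close> may lie outside \<open>\<Omega>\<close>, is a null set of times.\<close>
lemma S_op_restrict_domain:
  "S_op \<Omega> \<nu> g x v = S_op \<Omega> \<nu> (\<lambda>y w. indicator \<Omega> y * g y w) x v"
  unfolding S_op_def set_lebesgue_integral_def
proof (rule integral_lborel_cong_except_point)
  fix s
  assume "s \<noteq> tau \<Omega> x v"
  then have "x - s *\<^sub>R v \<in> \<Omega>" if "s \<in> {0..tau \<Omega> x v}"
    using that by (intro mem_before_tau) auto
  then show "indicator {0..tau \<Omega> x v} s *\<^sub>R (exp (- \<nu> v * s) * g (x - s *\<^sub>R v) v) =
      indicator {0..tau \<Omega> x v} s *\<^sub>R (exp (- \<nu> v * s) * (indicator \<Omega> (x - s *\<^sub>R v) * g (x - s *\<^sub>R v) v))"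
    by (cases "s \<in> {0..tau \<Omega> x v}") auto
qed

lemma borel_measurable_S_op:
  fixes g :: "vec3 \<Rightarrow> vec3 \<Rightarrow> real"
  assumes "open \<Omega>" "bounded \<Omega>" and [measurable]: "\<nu> \<in> borel_measurable borel"
    and g: "(\<lambda>z. g (fst z) (snd z)) \<in> borel_measurable (borel \<Otimes>\<^sub>M borel)"
  shows "(\<lambda>z. S_op \<Omega> \<nu> g (fst z) (snd z)) \<in> borel_measurable (borel \<Otimes>\<^sub>M borel)"
proof -
  have [measurable]: "(\<lambda>z. tau \<Omega> (fst z) (snd z)) \<in> borel_measurable (borel \<Otimes>\<^sub>M borel)"
    using borel_measurable_tau[OF assms(1,2)] by (simp add: borel_prod)
  have "(\<lambda>p::(vec3 \<times> vec3) \<times> real. (fst (fst p) - snd p *\<^sub>R snd (fst p), snd (fst p)))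
      \<in> measurable ((borel \<Otimes>\<^sub>M borel) \<Otimes>\<^sub>M lborel) (borel \<Otimes>\<^sub>M borel)"
    by measurable
  from measurable_compose[OF this g]
  have [measurable]: "(\<lambda>p. g (fst (fst p) - snd p *\<^sub>R snd (fst p)) (snd (fst p)))
      \<in> borel_measurable ((borel \<Otimes>\<^sub>M borel) \<Otimes>\<^sub>M lborel)"
    by simp
  have [measurable]: "(\<lambda>p. indicator {0..tau \<Omega> (fst (fst p)) (snd (fst p))} (snd p) :: real)
      \<in> borel_measurable ((borel \<Otimes>\<^sub>M borel) \<Otimes>\<^sub>M lborel)"
    unfolding indicator_def atLeastAtMost_iff mem_Collect_eq by measurable
  show ?thesis
    unfolding S_op_def set_lebesgue_integral_def
    by (rule lborel.borel_measurable_lebesgue_integral) (unfold split_beta', measurable)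
qed

lemma borel_measurable_Kop:
  assumes k: "(\<lambda>z. k (fst z) (snd z)) \<in> borel_measurable (borel \<Otimes>\<^sub>M borel)"
    and f: "(\<lambda>z. f (fst z) (snd z)) \<in> borel_measurable (borel \<Otimes>\<^sub>M borel)"
  shows "(\<lambda>z. Kop k f (fst z) (snd z)) \<in> borel_measurable (borel \<Otimes>\<^sub>M borel)"
proof -
  have "(\<lambda>p::(vec3 \<times> vec3) \<times> vec3. (fst (fst p), snd p))
      \<in> measurable ((borel \<Otimes>\<^sub>M borel) \<Otimes>\<^sub>M lborel) (borel \<Otimes>\<^sub>M borel)"
    by measurable
  from measurable_compose[OF this f]
  have [measurable]: "(\<lambda>p::(vec3 \<times> vec3) \<times> vec3. f (fst (fst p)) (snd p))
      \<in> borel_measurable ((borel \<Otimes>\<^sub>M borel) \<Otimes>\<^sub>M lborel)"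
    by simp
  have "(\<lambda>p::(vec3 \<times> vec3) \<times> vec3. (snd (fst p), snd p))
      \<in> measurable ((borel \<Otimes>\<^sub>M borel) \<Otimes>\<^sub>M lborel) (borel \<Otimes>\<^sub>M borel)"
    by measurable
  from measurable_compose[OF this k]
  have [measurable]: "(\<lambda>p::(vec3 \<times> vec3) \<times> vec3. k (snd (fst p)) (snd p))
      \<in> borel_measurable ((borel \<Otimes>\<^sub>M borel) \<Otimes>\<^sub>M lborel)"
    by simp
  show ?thesis
    unfolding Kop_def
    by (rule lborel.borel_measurable_lebesgue_integral[where f="\<lambda>z w. k (snd z) w * f (fst z) w", simplified])
      measurable
qed

text \<open>\<open>h\<close> is only assumed measurable on \<open>\<Omega> \<times> \<real>\<^sup>3\<close>; by \<open>S_op_restrict_domain\<close> the composite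
  \<open>S K h\<close> only sees the restriction of \<open>h\<close> to \<open>\<Omega>\<close>.\<close>
lemma borel_measurable_S_op_Kop:
  assumes "open \<Omega>" "bounded \<Omega>" "\<nu> \<in> borel_measurable borel"
    and k: "(\<lambda>z. k (fst z) (snd z)) \<in> borel_measurable (borel \<Otimes>\<^sub>M borel)"
    and f: "(\<lambda>z. indicator \<Omega> (fst z) * f (fst z) (snd z)) \<in> borel_measurable (borel \<Otimes>\<^sub>M borel)"
  shows "(\<lambda>z. S_op \<Omega> \<nu> (Kop k f) (fst z) (snd z)) \<in> borel_measurable (borel \<Otimes>\<^sub>M borel)"
proof -
  have \<Omega>[measurable]: "\<Omega> \<in> sets borel"
    using assms(1) by auto
  define F where "F y w = indicator \<Omega> y * f y w" for y w
  have eq: "(\<lambda>y w. indicator \<Omega> y * Kop k f y w) = (\<lambda>y w. indicator \<Omega> y * Kop k F y w)"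
    by (auto simp: Kop_def F_def fun_eq_iff indicator_def)
  have "S_op \<Omega> \<nu> (Kop k f) x v = S_op \<Omega> \<nu> (Kop k F) x v" for x v
  proof -
    have "S_op \<Omega> \<nu> (Kop k f) x v = S_op \<Omega> \<nu> (\<lambda>y w. indicator \<Omega> y * Kop k f y w) x v"
      by (rule S_op_restrict_domain)
    also have "\<dots> = S_op \<Omega> \<nu> (Kop k F) x v"
      unfolding eq by (rule S_op_restrict_domain[symmetric])
    finally show ?thesis .
  qed
  moreover have "(\<lambda>z. S_op \<Omega> \<nu> (Kop k F) (fst z) (snd z)) \<in> borel_measurable (borel \<Otimes>\<^sub>M borel)"
    using f unfolding F_def by (intro borel_measurable_S_op borel_measurable_Kop assms)
  ultimately show ?thesis
    by simp
qed

lemma borel_measurable_S_op_Kop_twice: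
  assumes "open \<Omega>" "bounded \<Omega>" "\<nu> \<in> borel_measurable borel"
    and k: "(\<lambda>z. k (fst z) (snd z)) \<in> borel_measurable (borel \<Otimes>\<^sub>M borel)"
    and h: "set_borel_measurable lborel (\<Omega> \<times> UNIV) (\<lambda>(x, v). h x v)"
  shows "(\<lambda>z. S_op \<Omega> \<nu> (Kop k (S_op \<Omega> \<nu> (Kop k h))) (fst z) (snd z)) \<in> borel_measurable (borel \<Otimes>\<^sub>M borel)"
proof -
  have [measurable]: "\<Omega> \<in> sets borel"
    using assms(1) by auto
  have "(\<lambda>z. indicator \<Omega> (fst z) * h (fst z) (snd z)) = (\<lambda>z. indicator (\<Omega> \<times> UNIV) z *\<^sub>R (\<lambda>(x, v). h x v) z)"
    by (auto simp: fun_eq_iff indicator_def)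
  with h have "(\<lambda>z. indicator \<Omega> (fst z) * h (fst z) (snd z)) \<in> borel_measurable (borel \<Otimes>\<^sub>M borel)"
    by (simp add: set_borel_measurable_def borel_prod)
  then have [measurable]: "(\<lambda>z. S_op \<Omega> \<nu> (Kop k h) (fst z) (snd z)) \<in> borel_measurable (borel \<Otimes>\<^sub>M borel)"
    by (rule borel_measurable_S_op_Kop[OF assms(1-3) k])
  have "(\<lambda>z. indicator \<Omega> (fst z) * S_op \<Omega> \<nu> (Kop k h) (fst z) (snd z)) \<in> borel_measurable (borel \<Otimes>\<^sub>M borel)"
    by measurable
  then show ?thesis
    by (rule borel_measurable_S_op_Kop[OF assms(1-3) k])
qed

lemma AE_Kop_bound:
  fixes f :: "vec3 \<Rightarrow> vec3 \<Rightarrow> real" and \<omega> Kc :: "vec3 \<Rightarrow> real"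
  assumes f: "AE z in lborel. fst z \<in> \<Omega> \<longrightarrow> snd z \<noteq> 0 \<longrightarrow> \<bar>f (fst z) (snd z)\<bar> \<le> A * \<omega> (snd z)"
    and "0 \<le> A" "\<And>w. 0 \<le> \<omega> w" "\<omega> \<in> borel_measurable borel"
    and k: "(\<lambda>z. k (fst z) (snd z)) \<in> borel_measurable (borel \<Otimes>\<^sub>M borel)"
    and K: "\<And>v. (\<integral>\<^sup>+w. ennreal (\<bar>k v w\<bar> * \<omega> w) \<partial>lborel) \<le> ennreal (Kc v)" "\<And>v. 0 \<le> Kc v"
  shows "AE x in lborel. x \<in> \<Omega> \<longrightarrow> (\<forall>v. \<bar>Kop k f x v\<bar> \<le> A * Kc v)"
proof -
  have "AE x in lborel. AE w in lborel. x \<in> \<Omega> \<longrightarrow> w \<noteq> 0 \<longrightarrow> \<bar>f x w\<bar> \<le> A * \<omega> w"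
    using lborel_pair.AE_pair[OF f[folded lborel_prod]] by simp
  then show ?thesis
  proof (rule eventually_mono, intro impI allI)
    fix x v
    assume fx: "AE w in lborel. x \<in> \<Omega> \<longrightarrow> w \<noteq> 0 \<longrightarrow> \<bar>f x w\<bar> \<le> A * \<omega> w" and "x \<in> \<Omega>"
    from fx AE_lborel_singleton[of 0]
    have "AE w in lborel. \<bar>k v w * f x w\<bar> \<le> A * (\<bar>k v w\<bar> * \<omega> w)"
    proof eventually_elim
      case (elim w)
      with \<open>x \<in> \<Omega>\<close> have "\<bar>k v w\<bar> * \<bar>f x w\<bar> \<le> \<bar>k v w\<bar> * (A * \<omega> w)"
        by (intro mult_left_mono) auto
      then show ?case
        by (simp add: abs_mult mult.left_commute)
    qed
    moreover have "(\<integral>\<^sup>+w. ennreal (A * (\<bar>k v w\<bar> * \<omega> w)) \<partial>lborel) \<le> ennreal (A * Kc v)"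
    proof -
      have [measurable]: "k v \<in> borel_measurable borel" "\<omega> \<in> borel_measurable borel"
        using measurable_Pair2[OF k, of v] assms(4) by simp_all
      have "(\<integral>\<^sup>+w. ennreal (A * (\<bar>k v w\<bar> * \<omega> w)) \<partial>lborel)
          = ennreal A * (\<integral>\<^sup>+w. ennreal (\<bar>k v w\<bar> * \<omega> w) \<partial>lborel)"
        using assms(2,3) by (subst nn_integral_cmult[symmetric]) (auto simp: ennreal_mult)
      also have "\<dots> \<le> ennreal A * ennreal (Kc v)"
        using K(1) by (rule mult_left_mono) simp
      finally show ?thesis
        using assms(2) K(2) by (simp add: ennreal_mult)
    qed
    ultimately show "\<bar>Kop k f x v\<bar> \<le> A * Kc v"
      unfolding Kop_def using assms(2) K(2) by (intro abs_integral_le_of_nn_integral_le) auto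
  qed
qed

text \<open>By \<open>AE_lborel_line_not_in\<close>, the almost-everywhere bound on \<open>g\<close> holds at almost
  every point of almost every backward characteristic.\<close>
lemma AE_S_op_bound:
  assumes "open \<Omega>" "bounded \<Omega>" "\<And>v. 0 < \<nu> v"
    and g: "AE x in lborel. x \<in> \<Omega> \<longrightarrow> (\<forall>v. \<bar>g x v\<bar> \<le> B v)" and "\<And>v. 0 \<le> B v"
  shows "AE z in lborel. fst z \<in> \<Omega> \<longrightarrow> snd z \<noteq> 0 \<longrightarrow>
           \<bar>S_op \<Omega> \<nu> g (fst z) (snd z)\<bar> \<le> B (snd z) * min (tau \<Omega> (fst z) (snd z)) (1 / \<nu> (snd z))"
proof -
  from g obtain N where N: "{x \<in> space lborel. \<not> (x \<in> \<Omega> \<longrightarrow> (\<forall>v. \<bar>g x v\<bar> \<le> B v))} \<subseteq> N"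
    "emeasure lborel N = 0" "N \<in> sets lborel"
    by (rule AE_E)
  then have N: "N \<in> null_sets lborel" "\<And>x. x \<in> \<Omega> \<Longrightarrow> x \<notin> N \<Longrightarrow> \<forall>v. \<bar>g x v\<bar> \<le> B v"
    by auto
  show ?thesis
    using AE_lborel_line_not_in[OF N(1)]
  proof (rule eventually_mono, intro impI)
    fix z :: "vec3 \<times> vec3"
    obtain x v where z: "z = (x, v)"
      by (cases z)
    assume "AE s in lborel. fst z - s *\<^sub>R snd z \<notin> N" "fst z \<in> \<Omega>" "snd z \<noteq> 0"
    then have line: "AE s in lborel. x - s *\<^sub>R v \<notin> N" and "x \<in> \<Omega>" "v \<noteq> 0"
      by (simp_all add: z)
    have "AE s in lborel. 0 \<le> s \<and> s < tau \<Omega> x v \<longrightarrow> \<bar>g (x - s *\<^sub>R v) v\<bar> \<le> B v"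
      using line by eventually_elim (auto dest: N(2)[OF mem_before_tau])
    moreover have "0 \<le> tau \<Omega> x v"
      using tau_exits(1)[OF assms(1,2)] \<open>v \<noteq> 0\<close> by blast
    ultimately show "\<bar>S_op \<Omega> \<nu> g (fst z) (snd z)\<bar>
        \<le> B (snd z) * min (tau \<Omega> (fst z) (snd z)) (1 / \<nu> (snd z))"
      using abs_S_op_le assms(3,5) by (simp add: z)
  qed
qed

lemma AE_S_op_Kop_bound:
  fixes \<omega> T :: "vec3 \<Rightarrow> real"
  assumes "open \<Omega>" "bounded \<Omega>" "\<And>v. 0 < \<nu> v"
    and f: "AE z in lborel. fst z \<in> \<Omega> \<longrightarrow> snd z \<noteq> 0 \<longrightarrow> \<bar>f (fst z) (snd z)\<bar> \<le> A * \<omega> (snd z)"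
    and "0 \<le> A" "\<And>w. 0 \<le> \<omega> w" "\<omega> \<in> borel_measurable borel"
    and k: "(\<lambda>z. k (fst z) (snd z)) \<in> borel_measurable (borel \<Otimes>\<^sub>M borel)"
    and K: "\<And>v. (\<integral>\<^sup>+w. ennreal (\<bar>k v w\<bar> * \<omega> w) \<partial>lborel) \<le> ennreal (C * exp (- \<alpha> * (norm v)\<^sup>2))"
      "0 \<le> C"
    and T: "\<And>x v. x \<in> \<Omega> \<Longrightarrow> v \<noteq> 0 \<Longrightarrow> min (tau \<Omega> x v) (1 / \<nu> v) \<le> T v"
  shows "AE z in lborel. fst z \<in> \<Omega> \<longrightarrow> snd z \<noteq> 0 \<longrightarrow>
           \<bar>S_op \<Omega> \<nu> (Kop k f) (fst z) (snd z)\<bar> \<le> A * C * T (snd z) * exp (- \<alpha> * (norm (snd z))\<^sup>2)"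
proof -
  have "AE x in lborel. x \<in> \<Omega> \<longrightarrow> (\<forall>v. \<bar>Kop k f x v\<bar> \<le> A * (C * exp (- \<alpha> * (norm v)\<^sup>2)))"
    by (rule AE_Kop_bound[OF f assms(5-7) k K(1)]) (simp add: K(2))
  then have "AE z in lborel. fst z \<in> \<Omega> \<longrightarrow> snd z \<noteq> 0 \<longrightarrow> \<bar>S_op \<Omega> \<nu> (Kop k f) (fst z) (snd z)\<bar>
      \<le> A * (C * exp (- \<alpha> * (norm (snd z))\<^sup>2)) * min (tau \<Omega> (fst z) (snd z)) (1 / \<nu> (snd z))"
    by (rule AE_S_op_bound[OF assms(1-3)]) (simp add: assms(5) K(2))
  then show ?thesis
  proof (rule eventually_mono, intro impI)
    fix z :: "vec3 \<times> vec3"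
    assume "fst z \<in> \<Omega>" "snd z \<noteq> 0" and "fst z \<in> \<Omega> \<longrightarrow> snd z \<noteq> 0 \<longrightarrow> \<bar>S_op \<Omega> \<nu> (Kop k f) (fst z) (snd z)\<bar>
      \<le> A * (C * exp (- \<alpha> * (norm (snd z))\<^sup>2)) * min (tau \<Omega> (fst z) (snd z)) (1 / \<nu> (snd z))"
    moreover have "A * (C * exp (- \<alpha> * (norm (snd z))\<^sup>2)) * min (tau \<Omega> (fst z) (snd z)) (1 / \<nu> (snd z))
        \<le> A * (C * exp (- \<alpha> * (norm (snd z))\<^sup>2)) * T (snd z)"
      using T[OF \<open>fst z \<in> \<Omega>\<close> \<open>snd z \<noteq> 0\<close>] assms(5) K(2) by (intro mult_left_mono) auto
    ultimately show "\<bar>S_op \<Omega> \<nu> (Kop k f) (fst z) (snd z)\<bar> \<le> A * C * T (snd z) * exp (- \<alpha> * (norm (snd z))\<^sup>2)"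
      by (simp add: mult_ac)
  qed
qed

lemma wnorm_AE_bound:
  assumes "open \<Omega>" "\<Omega> \<noteq> {}" "wnorm \<Omega> \<alpha> h < \<infinity>"
  obtains M where "0 \<le> M" "wnorm \<Omega> \<alpha> h = ereal M"
    "AE z in lborel. fst z \<in> \<Omega> \<longrightarrow> \<bar>h (fst z) (snd z)\<bar> \<le> M * exp (- \<alpha> * (norm (snd z))\<^sup>2)"
proof -
  define R where "R = \<Omega> \<times> (UNIV :: vec3 set)"
  define F where "F = (\<lambda>(x, v). ereal (exp (\<alpha> * (norm v)\<^sup>2) * \<bar>h x v\<bar>))"
  have R: "open R" "R \<noteq> {}" "R \<in> sets lborel"
    using assms(1,2) by (auto simp: R_def open_Times)
  then have R_space: "R \<inter> space lborel \<in> sets lborel"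
    by simp
  have nontrivial: "\<not> (AE z in restrict_space lborel R. False)"
    using emeasure_lborel_open_pos[OF R(1,2)] R(3)
    by (simp add: eventually_False ae_filter_eq_bot_iff emeasure_restrict_space)
  have bound: "AE z in restrict_space lborel R. F z \<le> wnorm \<Omega> \<alpha> h"
    unfolding wnorm_def R_def F_def by (rule esssup_AE)
  have "0 \<le> wnorm \<Omega> \<alpha> h"
  proof (rule ccontr)
    assume "\<not> 0 \<le> wnorm \<Omega> \<alpha> h"
    moreover have "0 \<le> F z" for z
      by (simp add: F_def split: prod.splits)
    ultimately have "AE z in restrict_space lborel R. False"
      using bound by (elim eventually_mono) (meson order_trans)
    with nontrivial show False ..
  qed
  with assms(3) obtain M where M: "wnorm \<Omega> \<alpha> h = ereal M" and "0 \<le> M"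
    by (cases "wnorm \<Omega> \<alpha> h") auto
  have "AE z in lborel. fst z \<in> \<Omega> \<longrightarrow> \<bar>h (fst z) (snd z)\<bar> \<le> M * exp (- \<alpha> * (norm (snd z))\<^sup>2)"
    using bound unfolding AE_restrict_space_iff[OF R_space] M
  proof (rule eventually_mono, intro impI)
    fix z :: "vec3 \<times> vec3"
    assume "z \<in> R \<longrightarrow> F z \<le> ereal M" and "fst z \<in> \<Omega>"
    then have "exp (\<alpha> * (norm (snd z))\<^sup>2) * \<bar>h (fst z) (snd z)\<bar> \<le> M"
      by (auto simp: R_def F_def mem_Times_iff split: prod.splits)
    then show "\<bar>h (fst z) (snd z)\<bar> \<le> M * exp (- \<alpha> * (norm (snd z))\<^sup>2)"
      by (simp add: exp_minus field_simps)
  qed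
  with \<open>0 \<le> M\<close> M show ?thesis
    by (rule that)
qed

lemma wnorm_le_of_AE_bound:
  assumes "open \<Omega>" and f: "(\<lambda>z. f (fst z) (snd z)) \<in> borel_measurable (borel \<Otimes>\<^sub>M borel)"
    and bound: "AE z in lborel. fst z \<in> \<Omega> \<longrightarrow> snd z \<noteq> 0 \<longrightarrow>
                  \<bar>f (fst z) (snd z)\<bar> \<le> c * exp (- \<alpha> * (norm (snd z))\<^sup>2)"
  shows "wnorm \<Omega> \<alpha> f \<le> ereal c"
  unfolding wnorm_def
proof (rule esssup_I)
  have R: "(\<Omega> \<times> UNIV) \<inter> space lborel \<in> sets lborel"
    using assms(1) by (auto intro: borel_open open_Times)
  have [measurable]: "(\<lambda>z. f (fst z) (snd z)) \<in> borel_measurable (borel \<Otimes>\<^sub>M borel)"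
    by (fact f)
  have "(\<lambda>z. ereal (exp (\<alpha> * (norm (snd z))\<^sup>2) * \<bar>f (fst z) (snd z)\<bar>)) \<in> borel_measurable (borel \<Otimes>\<^sub>M borel)"
    by measurable
  then show "(\<lambda>(x, v). ereal (exp (\<alpha> * (norm v)\<^sup>2) * \<bar>f x v\<bar>)) \<in> borel_measurable (restrict_space lborel (\<Omega> \<times> UNIV))"
    by (intro measurable_restrict_space1) (simp add: borel_prod case_prod_beta')
  have "AE z in lborel. snd z \<noteq> (0::vec3)"
  proof -
    have "UNIV \<times> {0::vec3} \<in> null_sets (lborel \<Otimes>\<^sub>M lborel)"
      by (intro lborel.times_in_null_sets2) auto
    then have "UNIV \<times> {0::vec3} \<in> null_sets lborel"
      by (simp add: lborel_prod)
    then show ?thesis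
      by (rule AE_I'[THEN eventually_mono]) auto
  qed
  with bound show "AE z in restrict_space lborel (\<Omega> \<times> UNIV). (\<lambda>(x, v). ereal (exp (\<alpha> * (norm v)\<^sup>2) * \<bar>f x v\<bar>)) z \<le> ereal c"
    unfolding AE_restrict_space_iff[OF R]
  proof eventually_elim
    case (elim z)
    show ?case
    proof
      assume "z \<in> \<Omega> \<times> UNIV"
      with elim have "\<bar>f (fst z) (snd z)\<bar> \<le> c * exp (- \<alpha> * (norm (snd z))\<^sup>2)"
        by (simp add: mem_Times_iff)
      then have "exp (\<alpha> * (norm (snd z))\<^sup>2) * \<bar>f (fst z) (snd z)\<bar> \<le> c"
        by (simp add: exp_minus field_simps)
      then show "(case z of (x, v) \<Rightarrow> ereal (exp (\<alpha> * (norm v)\<^sup>2) * \<bar>f x v\<bar>)) \<le> ereal c"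
        by (simp add: case_prod_beta')
    qed
  qed
qed

lemma wnorm_S_op_Kop_twice_le:
  assumes \<Omega>: "open \<Omega>" "bounded \<Omega>" "\<Omega> \<noteq> {}" "wnorm \<Omega> \<alpha> h < \<infinity>"
    and h: "set_borel_measurable lborel (\<Omega> \<times> UNIV) (\<lambda>(x, v). h x v)"
    and c: "0 < c" "\<And>v. c \<le> \<nu> v" and \<nu>: "\<nu> \<in> borel_measurable borel"
    and k: "(\<lambda>z. k (fst z) (snd z)) \<in> borel_measurable (borel \<Otimes>\<^sub>M borel)"
    and C: "0 \<le> C1" "0 \<le> C2"
      "\<And>v. (\<integral>\<^sup>+w. ennreal (\<bar>k v w\<bar> * exp (- \<alpha> * (norm w)\<^sup>2)) \<partial>lborel)
         \<le> ennreal (C1 * exp (- \<alpha> * (norm v)\<^sup>2))"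
      "\<And>v. (\<integral>\<^sup>+w. ennreal (\<bar>k v w\<bar> * (exp (- \<alpha> * (norm w)\<^sup>2) * norm w powr (-1))) \<partial>lborel)
         \<le> ennreal (C2 * exp (- \<alpha> * (norm v)\<^sup>2))"
  shows "wnorm \<Omega> \<alpha> (S_op \<Omega> \<nu> (Kop k (S_op \<Omega> \<nu> (Kop k h))))
           \<le> ereal (C1 * C2 / c) * ereal (diameter \<Omega>) * wnorm \<Omega> \<alpha> h"
proof -
  obtain M where M: "0 \<le> M" "wnorm \<Omega> \<alpha> h = ereal M"
    "AE z in lborel. fst z \<in> \<Omega> \<longrightarrow> \<bar>h (fst z) (snd z)\<bar> \<le> M * exp (- \<alpha> * (norm (snd z))\<^sup>2)"
    using wnorm_AE_bound[OF \<Omega>(1,3,4)] by blast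
  define d where "d = diameter \<Omega>"
  have \<nu>_pos: "0 < \<nu> v" for v
    using c less_le_trans by blast
  have exit_time: "min (tau \<Omega> x v) (1 / \<nu> v) \<le> d * norm v powr (-1)" if "x \<in> \<Omega>" "v \<noteq> 0" for x v
    using tau_le_diameter_div_norm[OF \<Omega>(2) that] by (simp add: d_def powr_minus_divide min.coboundedI1)
  have inv_nu: "min (tau \<Omega> x v) (1 / \<nu> v) \<le> 1 / c" for x v
    using c(1) c(2)[of v] by (simp add: min.coboundedI2 frac_le)
  have "AE z in lborel. fst z \<in> \<Omega> \<longrightarrow> snd z \<noteq> 0 \<longrightarrow> \<bar>S_op \<Omega> \<nu> (Kop k h) (fst z) (snd z)\<bar>
      \<le> M * C1 * (d * norm (snd z) powr (-1)) * exp (- \<alpha> * (norm (snd z))\<^sup>2)"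
    using M(3) by (intro AE_S_op_Kop_bound[OF \<Omega>(1,2) \<nu>_pos _ M(1) _ _ k C(3,1) exit_time])
      (auto elim: eventually_mono)
  then have "AE z in lborel. fst z \<in> \<Omega> \<longrightarrow> snd z \<noteq> 0 \<longrightarrow> \<bar>S_op \<Omega> \<nu> (Kop k h) (fst z) (snd z)\<bar>
      \<le> M * C1 * d * (exp (- \<alpha> * (norm (snd z))\<^sup>2) * norm (snd z) powr (-1))"
    by (elim eventually_mono) (simp add: mult_ac)
  then have "AE z in lborel. fst z \<in> \<Omega> \<longrightarrow> snd z \<noteq> 0 \<longrightarrow>
      \<bar>S_op \<Omega> \<nu> (Kop k (S_op \<Omega> \<nu> (Kop k h))) (fst z) (snd z)\<bar>
        \<le> M * C1 * d * C2 * (1 / c) * exp (- \<alpha> * (norm (snd z))\<^sup>2)"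
    using M(1) C(1) diameter_ge_0[OF \<Omega>(2)]
    by (intro AE_S_op_Kop_bound[OF \<Omega>(1,2) \<nu>_pos _ _ _ _ k C(4,2) inv_nu]) (auto simp: d_def)
  then have "wnorm \<Omega> \<alpha> (S_op \<Omega> \<nu> (Kop k (S_op \<Omega> \<nu> (Kop k h)))) \<le> ereal (M * C1 * d * C2 * (1 / c))"
    by (intro wnorm_le_of_AE_bound \<Omega>(1) borel_measurable_S_op_Kop_twice \<Omega>(2) \<nu> k h)
  then show ?thesis
    by (simp add: M(2) d_def mult_ac)
qed

theorem corollary3p2:
  fixes \<nu> :: "vec3 \<Rightarrow> real" and k :: "vec3 \<Rightarrow> vec3 \<Rightarrow> real" and \<gamma> \<rho> \<alpha> :: real
  assumes "propertyA \<nu> k \<gamma> \<rho>"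
    and "0 \<le> \<alpha>" and "\<alpha> < (1 - \<rho>) / 2"
  shows "\<exists>C\<ge>0. \<forall>(\<Omega>::vec3 set) h.
           open \<Omega> \<and> connected \<Omega> \<and> \<Omega> \<noteq> {} \<and> bounded \<Omega> \<and>
           set_borel_measurable lborel (\<Omega> \<times> UNIV) (\<lambda>(x, v). h x v) \<and>
           wnorm \<Omega> \<alpha> h < \<infinity> \<longrightarrow>
           wnorm \<Omega> \<alpha> (S_op \<Omega> \<nu> (Kop k (S_op \<Omega> \<nu> (Kop k h))))
             \<le> ereal C * ereal (diameter \<Omega>) * wnorm \<Omega> \<alpha> h"
proof -
  obtain c where c: "0 < c" "\<And>v. c \<le> \<nu> v"
    using propertyA_nu_lower_bound[OF assms(1)] by blast
  obtain C1 C2 where C: "0 \<le> C1" "0 \<le> C2"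
    "\<And>v. (\<integral>\<^sup>+w. ennreal (\<bar>k v w\<bar> * exp (- \<alpha> * (norm w)\<^sup>2)) \<partial>lborel) \<le> ennreal (C1 * exp (- \<alpha> * (norm v)\<^sup>2))"
    "\<And>v. (\<integral>\<^sup>+w. ennreal (\<bar>k v w\<bar> * (exp (- \<alpha> * (norm w)\<^sup>2) * norm w powr (-1))) \<partial>lborel)
       \<le> ennreal (C2 * exp (- \<alpha> * (norm v)\<^sup>2))"
    using propertyA_weighted_kernel_bounds[OF assms] by blast
  show ?thesis
  proof (intro exI[of _ "C1 * C2 / c"] conjI allI impI)
    show "0 \<le> C1 * C2 / c"
      using C c by simp
    fix \<Omega> :: "vec3 set" and h :: "vec3 \<Rightarrow> vec3 \<Rightarrow> real"
    assume "open \<Omega> \<and> connected \<Omega> \<and> \<Omega> \<noteq> {} \<and> bounded \<Omega> \<and>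
      set_borel_measurable lborel (\<Omega> \<times> UNIV) (\<lambda>(x, v). h x v) \<and> wnorm \<Omega> \<alpha> h < \<infinity>"
    then show "wnorm \<Omega> \<alpha> (S_op \<Omega> \<nu> (Kop k (S_op \<Omega> \<nu> (Kop k h))))
        \<le> ereal (C1 * C2 / c) * ereal (diameter \<Omega>) * wnorm \<Omega> \<alpha> h"
      using wnorm_S_op_Kop_twice_le[OF _ _ _ _ _ c propertyA_nu_measurable[OF assms(1)]
          propertyA_kernel_measurable[OF assms(1)] C] by blast
  qed
qed

end
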